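(* Let $V=(v_1,\dots,v_D)$ be a non-increasing sequence of positive integers. If $\mathcal T$ is a $V$-regular rooted tree with depth $k$, then $\mathcal T$ is isomorphic to $\mathcal T_V^k$.
   Context: A rooted tree is a directed tree whose edges all point toward the root; its depth is the maximal distance of a vertex to the root. A vertex $c$ is a $k$-distant predecessor of $b$ if $c$ is at distance $k$ from $b$, i.e. there is a directed path of length $k$ from $c$ to $b$. With $v_i=v_D$ for all $i\ge D$, a directed graph is $V$-regular if for every positive integer $k$ and every vertex, the number of $k$-distant predecessors of that vertex is either $0$ or $v_1\cdots v_k$. Put $v_i=v_D$ for $i\ge D+1$; $\bullet$ is the one-vertex tree; for rooted trees $\mathcal T_1,\dots,\mathcal T_s$, $\langle\mathcal T_1\oplus\dots\oplus\mathcal T_s\rangle$ is the rooted tree whose root's children are roots of copies of $\mathcal T_1,\dots,\mathcal T_s$, and $k\times\mathcal T$ denotes $k$ disjoint copies of $\mathcal T$. Define $\mathcal T_V^0=\bullet$ and $\mathcal T_V^k=\big\langle v_k\times\mathcal T_V^{k-1}\oplus\bigoplus_{i=1}^{k-1}(v_i-v_{i+1})\times\mathcal T_V^{i-1}\big\rangle$ for $k\ge1$. *)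

theory Defs
  imports Main
begin

text \<open>Directed graphs are given by a vertex set Vs and an edge relation E.
  A rooted tree has all edges pointing toward the root r.\<close>

definition rooted_tree :: "'a set \<Rightarrow> ('a \<times> 'a) set \<Rightarrow> 'a \<Rightarrow> bool" where
  "rooted_tree Vs E r \<longleftrightarrow>
     E \<subseteq> Vs \<times> Vs \<and> r \<in> Vs \<and> (\<forall>y. (r, y) \<notin> E) \<and>
     (\<forall>x\<in>Vs. x \<noteq> r \<longrightarrow> (\<exists>!y. (x, y) \<in> E)) \<and>
     (\<forall>x\<in>Vs. (x, r) \<in> E\<^sup>*)"

definition distant_preds :: "'a set \<Rightarrow> ('a \<times> 'a) set \<Rightarrow> nat \<Rightarrow> 'a \<Rightarrow> 'a set" where
  "distant_preds Vs E k b = {c \<in> Vs. (c, b) \<in> E ^^ k}"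

definition tree_depth :: "'a set \<Rightarrow> ('a \<times> 'a) set \<Rightarrow> 'a \<Rightarrow> nat \<Rightarrow> bool" where
  "tree_depth Vs E r k \<longleftrightarrow>
     (\<exists>x\<in>Vs. (x, r) \<in> E ^^ k) \<and> (\<forall>x\<in>Vs. \<forall>n. (x, r) \<in> E ^^ n \<longrightarrow> n \<le> k)"

text \<open>The extended sequence v_i (1-based), with v_i = v_D for i >= D.\<close>
definition vseq :: "nat list \<Rightarrow> nat \<Rightarrow> nat" where
  "vseq vs i = vs ! (min i (length vs) - 1)"

definition V_regular :: "nat list \<Rightarrow> 'a set \<Rightarrow> ('a \<times> 'a) set \<Rightarrow> bool" where
  "V_regular vs Vs E \<longleftrightarrow>
     (\<forall>k>0. \<forall>b\<in>Vs. distant_preds Vs E k b = {} \<or>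
        (finite (distant_preds Vs E k b) \<and>
         card (distant_preds Vs E k b) = (\<Prod>i=1..k. vseq vs i)))"

definition rtree_iso :: "'a set \<Rightarrow> ('a \<times> 'a) set \<Rightarrow> 'a \<Rightarrow> 'b set \<Rightarrow> ('b \<times> 'b) set \<Rightarrow> 'b \<Rightarrow> bool" where
  "rtree_iso Vs1 E1 r1 Vs2 E2 r2 \<longleftrightarrow>
     (\<exists>f. bij_betw f Vs1 Vs2 \<and> f r1 = r2 \<and>
        (\<forall>x\<in>Vs1. \<forall>y\<in>Vs1. (x, y) \<in> E1 \<longleftrightarrow> (f x, f y) \<in> E2))"

datatype rtree = Node "rtree list"

fun TV :: "nat list \<Rightarrow> nat \<Rightarrow> rtree" where
  "TV vs 0 = Node []"
| "TV vs (Suc k) = Node (replicate (vseq vs (Suc k)) (TV vs k) @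
     concat (map (\<lambda>i. replicate (vseq vs i - vseq vs (i + 1)) (TV vs (i - 1))) [1..<Suc k]))"

text \<open>Vertices of an rtree are addresses (paths of child indices from the root).\<close>
fun subtree_at :: "rtree \<Rightarrow> nat list \<Rightarrow> rtree option" where
  "subtree_at t [] = Some t"
| "subtree_at (Node ts) (j # p) = (if j < length ts then subtree_at (ts ! j) p else None)"

definition tree_verts :: "rtree \<Rightarrow> nat list set" where
  "tree_verts t = {p. subtree_at t p \<noteq> None}"

definition tree_edges :: "rtree \<Rightarrow> (nat list \<times> nat list) set" where
  "tree_edges t = {(p, butlast p) | p. p \<in> tree_verts t \<and> p \<noteq> []}"

end

theory Submission
  imports Defs "HOL-Library.Disjoint_Sets"
begin

text \<open>Let the height of a vertex \<open>b\<close> be the length \<open>h\<close> of the longest path ending in \<open>b\<close>.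
  For \<open>m < h\<close>, V-regularity counts \<open>v\<^sub>1 \<cdots> v\<^sub>m\<^sub>+\<^sub>1\<close> vertices at distance \<open>m + 1\<close> above \<open>b\<close>;
  they split along the children of \<open>b\<close> into blocks of \<open>v\<^sub>1 \<cdots> v\<^sub>m\<close> vertices, one block for each
  child of height at least \<open>m\<close>. Hence \<open>b\<close> has exactly \<open>v\<^sub>m\<^sub>+\<^sub>1\<close> children of height at least \<open>m\<close>,
  which is also the number of children of height at least \<open>m\<close> of the root of \<open>T\<^sub>V\<^sup>h\<close>.
  A height-preserving bijection between these two sets of children lets us glue isomorphisms of
  the children's subtrees, obtained by induction on the height, into an isomorphism between the
  subtree above \<open>b\<close> and \<open>T\<^sub>V\<^sup>h\<close>; at the root, \<open>h = k\<close>.\<close>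

lemma count_list_replicate: "count_list (replicate n x) a = (if x = a then n else 0)"
  by (induction n) auto

lemma card_nth_eq_count_list: "card {j\<in>{..<length xs}. xs ! j = a} = count_list xs a"
  by (simp add: count_list_eq_length_filter length_filter_conv_card eq_commute)

lemma ex_bij_betw_fibrewise:
  assumes "finite A" "finite B" "\<And>a. card {x\<in>A. g x = a} = card {y\<in>B. g' y = a}"
  shows "\<exists>\<sigma>. bij_betw \<sigma> A B \<and> (\<forall>x\<in>A. g' (\<sigma> x) = g x)"
proof -
  have "\<forall>a. \<exists>\<beta>. bij_betw \<beta> {x\<in>A. g x = a} {y\<in>B. g' y = a}"
    using assms by (intro allI finite_same_card_bij) auto
  then obtain \<beta> where \<beta>: "\<And>a. bij_betw (\<beta> a) {x\<in>A. g x = a} {y\<in>B. g' y = a}"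
    by metis
  define \<sigma> where "\<sigma> x = \<beta> (g x) x" for x
  have "bij_betw \<sigma> (\<Union>a. {x\<in>A. g x = a}) (\<Union>a. {y\<in>B. g' y = a})"
  proof (rule bij_betw_UNION_disjoint)
    show "disjoint_family_on (\<lambda>a. {y\<in>B. g' y = a}) UNIV"
      by (auto simp: disjoint_family_on_def)
    show "bij_betw \<sigma> {x\<in>A. g x = a} {y\<in>B. g' y = a}" for a
      using \<beta>[of a] by (rule bij_betw_cong[THEN iffD1, rotated]) (simp add: \<sigma>_def)
  qed
  moreover have "(\<Union>a. {x\<in>A. g x = a}) = A" "(\<Union>a. {y\<in>B. g' y = a}) = B" by auto
  moreover have "g' (\<sigma> x) = g x" if "x \<in> A" for x
    using \<beta>[of "g x"] that unfolding \<sigma>_def bij_betw_def by auto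
  ultimately show ?thesis by auto
qed

fun child_heights :: "nat list \<Rightarrow> nat \<Rightarrow> nat list" where
  "child_heights vs 0 = []"
| "child_heights vs (Suc m) = replicate (vseq vs (Suc m)) m @
     concat (map (\<lambda>i. replicate (vseq vs i - vseq vs (i + 1)) (i - 1)) [1..<Suc m])"

lemma TV_eq_Node: "TV vs h = Node (map (TV vs) (child_heights vs h))"
  by (cases h) (simp_all add: map_concat comp_def map_replicate)

lemma count_list_child_heights:
  "count_list (child_heights vs h) a =
     (if a + 1 \<le> h then vseq vs (a + 1) else 0) - (if a + 2 \<le> h then vseq vs (a + 2) else 0)"
proof (cases h)
  case (Suc m)
  have "count_list (concat (map (\<lambda>i. replicate (vseq vs i - vseq vs (i + 1)) (i - 1)) [1..<Suc m])) a
      = (if a < m then vseq vs (a + 1) - vseq vs (a + 2) else 0)"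
    by (induction m) (auto simp: count_list_replicate)
  then show ?thesis
    unfolding Suc child_heights.simps count_list_append count_list_replicate
    by (cases "a = m") auto
qed simp

lemma vseq_pos:
  assumes "vs \<noteq> []" "\<forall>x\<in>set vs. 0 < x"
  shows "0 < vseq vs i"
proof -
  have "min i (length vs) - 1 < length vs"
    using assms(1) by (cases vs) auto
  then show ?thesis
    using assms(2) unfolding vseq_def by simp
qed

lemma tree_verts_Node:
  "tree_verts (Node ts) = insert [] (\<Union>j<length ts. (#) j ` tree_verts (ts ! j))"
proof (intro set_eqI)
  fix q
  show "q \<in> tree_verts (Node ts) \<longleftrightarrow> q \<in> insert [] (\<Union>j<length ts. (#) j ` tree_verts (ts ! j))"
    unfolding tree_verts_def by (cases q) auto
qed

lemma tree_edges_iff: "(p, q) \<in> tree_edges t \<longleftrightarrow> p \<in> tree_verts t \<and> p \<noteq> [] \<and> q = butlast p"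
  unfolding tree_edges_def by auto

locale in_tree =
  fixes Vs :: "'a set" and E :: "('a \<times> 'a) set" and r :: 'a
  assumes rooted: "rooted_tree Vs E r"
begin

lemma edge_in_Vs: "(x, y) \<in> E \<Longrightarrow> x \<in> Vs \<and> y \<in> Vs"
  using rooted unfolding rooted_tree_def by auto

lemma root_in_Vs: "r \<in> Vs"
  and no_edge_from_root: "(r, y) \<notin> E"
  and reaches_root: "x \<in> Vs \<Longrightarrow> (x, r) \<in> E\<^sup>*"
  using rooted unfolding rooted_tree_def by auto

lemma edge_unique: "(x, y) \<in> E \<Longrightarrow> (x, z) \<in> E \<Longrightarrow> y = z"
proof -
  assume edges: "(x, y) \<in> E" "(x, z) \<in> E"
  then have "x \<in> Vs" "x \<noteq> r"
    using edge_in_Vs no_edge_from_root by auto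
  then have "\<exists>!y. (x, y) \<in> E"
    using rooted unfolding rooted_tree_def by auto
  then show "y = z" using edges by auto
qed

lemma relpow_in_Vs: "(x, y) \<in> E ^^ n \<Longrightarrow> y \<in> Vs \<Longrightarrow> x \<in> Vs"
  by (induction n arbitrary: y) (auto dest: edge_in_Vs)

lemma relpow_deterministic:
  "(x, y) \<in> E ^^ n \<Longrightarrow> (x, z) \<in> E ^^ m \<Longrightarrow> n \<le> m \<Longrightarrow> (y, z) \<in> E ^^ (m - n)"
proof (induction n arbitrary: x m)
  case (Suc n)
  then obtain m' where m: "m = Suc m'" by (cases m) auto
  obtain w where w: "(x, w) \<in> E" "(w, y) \<in> E ^^ n"
    using Suc.prems(1) relpow_Suc_D2 by metis
  obtain w' where w': "(x, w') \<in> E" "(w', z) \<in> E ^^ m'"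
    using Suc.prems(2) m relpow_Suc_D2 by metis
  have "w = w'" using w w' edge_unique by blast
  then show ?case using Suc.IH[of w m'] w w' m Suc.prems(3) by auto
qed simp

lemma relpow_from_root: "(r, y) \<in> E ^^ n \<Longrightarrow> n = 0"
  by (metis no_edge_from_root not0_implies_Suc relpow_Suc_D2)

definition depth :: "'a \<Rightarrow> nat" where
  "depth x = (LEAST n. (x, r) \<in> E ^^ n)"

lemma depth_eq: assumes "(x, r) \<in> E ^^ n" shows "depth x = n"
  unfolding depth_def
proof (rule Least_equality)
  show "(x, r) \<in> E ^^ n" by (rule assms)
  show "n \<le> m" if "(x, r) \<in> E ^^ m" for m
    using relpow_deterministic[OF that assms] relpow_from_root by fastforce
qed

lemma relpow_depth: assumes "x \<in> Vs" shows "(x, r) \<in> E ^^ depth x"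
proof -
  obtain n where "(x, r) \<in> E ^^ n" using reaches_root[OF assms] rtrancl_power by blast
  then show ?thesis using depth_eq by simp
qed

lemma depth_relpow: assumes "(x, b) \<in> E ^^ n" "b \<in> Vs" shows "depth x = depth b + n"
proof -
  have "(x, r) \<in> E ^^ n O E ^^ depth b" using assms relpow_depth[of b] by blast
  then have "(x, r) \<in> E ^^ (n + depth b)" by (simp add: relpow_add)
  then show ?thesis using depth_eq by simp
qed

definition subtree :: "'a \<Rightarrow> 'a set" where
  "subtree b = {x. (x, b) \<in> E\<^sup>*}"

definition children :: "'a \<Rightarrow> 'a set" where
  "children b = {c. (c, b) \<in> E}"

lemma subtree_iff_relpow: "x \<in> subtree b \<longleftrightarrow> (\<exists>n. (x, b) \<in> E ^^ n)"
  unfolding subtree_def by (simp add: rtrancl_power)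

lemma subtree_self: "b \<in> subtree b"
  unfolding subtree_def by simp

lemma subtree_subset_Vs: "b \<in> Vs \<Longrightarrow> subtree b \<subseteq> Vs"
  using relpow_in_Vs by (auto simp: subtree_iff_relpow)

lemma subtree_root: "subtree r = Vs"
  using subtree_subset_Vs[OF root_in_Vs] reaches_root unfolding subtree_def by auto

lemma children_in_Vs: "c \<in> children b \<Longrightarrow> c \<in> Vs \<and> b \<in> Vs"
  unfolding children_def using edge_in_Vs by auto

lemma depth_le_subtree: "x \<in> subtree b \<Longrightarrow> b \<in> Vs \<Longrightarrow> depth b \<le> depth x"
  unfolding subtree_iff_relpow using depth_relpow by fastforce

lemma depth_child: "c \<in> children b \<Longrightarrow> depth c = Suc (depth b)"
  using depth_relpow[of c b 1] children_in_Vs unfolding children_def by simp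

lemma no_edge_into_subtree: "y \<in> subtree b \<Longrightarrow> (b, y) \<notin> E"
  using depth_le_subtree depth_child[of b y] edge_in_Vs unfolding children_def by fastforce

lemma parent_notin_child_subtree: "c \<in> children b \<Longrightarrow> b \<notin> subtree c"
  using depth_le_subtree depth_child children_in_Vs by fastforce

lemma subtree_decompose: "subtree b = insert b (\<Union>c\<in>children b. subtree c)"
proof (intro equalityI subsetI)
  fix x assume "x \<in> subtree b"
  then have "x = b \<or> (x, b) \<in> E\<^sup>+"
    unfolding subtree_def by (auto dest: rtranclD)
  then show "x \<in> insert b (\<Union>c\<in>children b. subtree c)"
    unfolding subtree_def children_def by (auto dest: tranclD2)
next
  fix x assume "x \<in> insert b (\<Union>c\<in>children b. subtree c)"
  then show "x \<in> subtree b"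
    unfolding subtree_def children_def by (auto intro: rtrancl_into_rtrancl)
qed

lemma child_subtrees_disjoint:
  assumes "c \<in> children b" "c' \<in> children b" "x \<in> subtree c" "x \<in> subtree c'"
  shows "c = c'"
proof -
  obtain n n' where n: "(x, c) \<in> E ^^ n" and n': "(x, c') \<in> E ^^ n'"
    using assms(3,4) unfolding subtree_iff_relpow by blast
  have "n = n'"
    using depth_relpow[OF n] depth_relpow[OF n'] depth_child[OF assms(1)] depth_child[OF assms(2)]
      children_in_Vs assms(1,2) by simp
  then show ?thesis using relpow_deterministic[OF n n'] by simp
qed

lemma edge_within_child_subtree:
  assumes "c \<in> children b" "x \<in> subtree c" "(x, y) \<in> E" "y \<noteq> b"
  shows "y \<in> subtree c"
proof -
  have "x \<noteq> c"
    using assms edge_unique unfolding children_def by blast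
  then have "(x, c) \<in> E\<^sup>+"
    using assms(2) unfolding subtree_def by (auto dest: rtranclD)
  then obtain z where "(x, z) \<in> E" "(z, c) \<in> E\<^sup>*"
    by (auto dest: tranclD)
  then show ?thesis
    using assms(3) edge_unique unfolding subtree_def by blast
qed

definition branch :: "'a \<Rightarrow> 'a \<Rightarrow> 'a" where
  "branch b x = (THE c. c \<in> children b \<and> x \<in> subtree c)"

lemma branch_eq: "c \<in> children b \<Longrightarrow> x \<in> subtree c \<Longrightarrow> branch b x = c"
  unfolding branch_def using child_subtrees_disjoint by blast

definition subtree_iso :: "'a \<Rightarrow> rtree \<Rightarrow> ('a \<Rightarrow> nat list) \<Rightarrow> bool" where
  "subtree_iso b t f \<longleftrightarrow> bij_betw f (subtree b) (tree_verts t) \<and> f b = [] \<and>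
     (\<forall>x\<in>subtree b. \<forall>y\<in>subtree b. (x, y) \<in> E \<longleftrightarrow> f x \<noteq> [] \<and> f y = butlast (f x))"

definition glue :: "'a \<Rightarrow> ('a \<Rightarrow> nat) \<Rightarrow> ('a \<Rightarrow> 'a \<Rightarrow> nat list) \<Rightarrow> 'a \<Rightarrow> nat list" where
  "glue b \<sigma> F x = (if x = b then [] else \<sigma> (branch b x) # F (branch b x) x)"

lemma glue_child: "c \<in> children b \<Longrightarrow> x \<in> subtree c \<Longrightarrow> glue b \<sigma> F x = \<sigma> c # F c x"
  unfolding glue_def using branch_eq parent_notin_child_subtree by auto

lemma glue_eq_Nil_iff: "glue b \<sigma> F x = [] \<longleftrightarrow> x = b"
  unfolding glue_def by simp

context
  fixes b :: 'a and ts :: "rtree list" and \<sigma> :: "'a \<Rightarrow> nat" and F :: "'a \<Rightarrow> 'a \<Rightarrow> nat list"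
  assumes bij_children: "bij_betw \<sigma> (children b) {..<length ts}"
    and iso_children: "\<And>c. c \<in> children b \<Longrightarrow> subtree_iso c (ts ! \<sigma> c) (F c)"
begin

lemma bij_betw_glue: "bij_betw (glue b \<sigma> F) (subtree b) (tree_verts (Node ts))"
proof -
  have "bij_betw (glue b \<sigma> F) (\<Union>c\<in>children b. subtree c)
      (\<Union>c\<in>children b. (#) (\<sigma> c) ` tree_verts (ts ! \<sigma> c))"
  proof (rule bij_betw_UNION_disjoint)
    show "disjoint_family_on (\<lambda>c. (#) (\<sigma> c) ` tree_verts (ts ! \<sigma> c)) (children b)"
      using bij_children unfolding disjoint_family_on_def bij_betw_def inj_on_def by auto
    show "bij_betw (glue b \<sigma> F) (subtree c) ((#) (\<sigma> c) ` tree_verts (ts ! \<sigma> c))"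
      if c: "c \<in> children b" for c
    proof -
      have "bij_betw ((#) (\<sigma> c)) (tree_verts (ts ! \<sigma> c)) ((#) (\<sigma> c) ` tree_verts (ts ! \<sigma> c))"
        by (rule inj_on_imp_bij_betw) (simp add: inj_on_def)
      then have "bij_betw ((#) (\<sigma> c) \<circ> F c) (subtree c) ((#) (\<sigma> c) ` tree_verts (ts ! \<sigma> c))"
        using iso_children[OF c] unfolding subtree_iso_def by (blast intro: bij_betw_trans)
      then show ?thesis
        by (rule bij_betw_cong[THEN iffD1, rotated]) (simp add: glue_child[OF c])
    qed
  qed
  moreover have "bij_betw (glue b \<sigma> F) {b} {[]}"
    unfolding glue_def by simp
  ultimately have "bij_betw (glue b \<sigma> F) ({b} \<union> (\<Union>c\<in>children b. subtree c))
      ({[]} \<union> (\<Union>c\<in>children b. (#) (\<sigma> c) ` tree_verts (ts ! \<sigma> c)))"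
    by (intro bij_betw_combine) auto
  moreover have "{..<length ts} = \<sigma> ` children b"
    using bij_children by (simp add: bij_betw_def)
  ultimately show ?thesis
    unfolding tree_verts_Node subtree_decompose[of b] by (simp add: image_image)
qed

lemma glue_eq_Cons_iff:
  assumes c: "c \<in> children b" and y: "y \<in> subtree b"
  shows "glue b \<sigma> F y = \<sigma> c # p \<longleftrightarrow> y \<in> subtree c \<and> F c y = p"
proof
  assume glue_y: "glue b \<sigma> F y = \<sigma> c # p"
  then have "y \<noteq> b" using glue_eq_Nil_iff[of b \<sigma> F y] by auto
  then obtain c' where c': "c' \<in> children b" "y \<in> subtree c'"
    using y subtree_decompose[of b] by auto
  then have "\<sigma> c' = \<sigma> c" "F c' y = p"
    using glue_y glue_child by auto
  moreover have "c' = c"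
    using \<open>\<sigma> c' = \<sigma> c\<close> bij_children c c'(1) unfolding bij_betw_def inj_on_def by blast
  ultimately show "y \<in> subtree c \<and> F c y = p" using c' by simp
next
  assume "y \<in> subtree c \<and> F c y = p"
  then show "glue b \<sigma> F y = \<sigma> c # p" using glue_child c by simp
qed

lemma iso_child_eq_Nil_iff:
  assumes "c \<in> children b" "x \<in> subtree c"
  shows "F c x = [] \<longleftrightarrow> x = c"
  using iso_children[OF assms(1)] assms(2) subtree_self
  unfolding subtree_iso_def bij_betw_def inj_on_def by metis

lemma edge_from_child_subtree_iff:
  assumes c: "c \<in> children b" and x: "x \<in> subtree c" "x \<noteq> c"
  shows "(x, y) \<in> E \<longleftrightarrow> y \<in> subtree c \<and> F c y = butlast (F c x)"
proof -
  have iso_edges: "\<forall>x\<in>subtree c. \<forall>y\<in>subtree c. (x, y) \<in> E \<longleftrightarrow> F c x \<noteq> [] \<and> F c y = butlast (F c x)"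
    using iso_children[OF c] unfolding subtree_iso_def by blast
  have "(x, b) \<notin> E"
    using child_subtrees_disjoint[OF _ c subtree_self x(1)] x(2) unfolding children_def by blast
  then have "(x, y) \<in> E \<Longrightarrow> y \<in> subtree c"
    using edge_within_child_subtree c x(1) by blast
  then show ?thesis
    using iso_edges iso_child_eq_Nil_iff[OF c x(1)] x by blast
qed

lemma glue_edge_iff:
  assumes x: "x \<in> subtree b" and y: "y \<in> subtree b"
  shows "(x, y) \<in> E \<longleftrightarrow> glue b \<sigma> F x \<noteq> [] \<and> glue b \<sigma> F y = butlast (glue b \<sigma> F x)"
proof (cases "x = b")
  case True
  then show ?thesis using no_edge_into_subtree y by (simp add: glue_def)
next
  case False
  then obtain c where c: "c \<in> children b" "x \<in> subtree c"
    using x subtree_decompose[of b] by auto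
  have glue_x: "glue b \<sigma> F x = \<sigma> c # F c x"
    using glue_child c .
  show ?thesis
  proof (cases "x = c")
    case True
    have "(c, y) \<in> E \<longleftrightarrow> y = b"
      using c(1) edge_unique unfolding children_def by blast
    then show ?thesis
      using glue_x True iso_child_eq_Nil_iff[OF c] glue_eq_Nil_iff[of b \<sigma> F y] by simp
  next
    case False
    then have "(x, y) \<in> E \<longleftrightarrow> glue b \<sigma> F y = \<sigma> c # butlast (F c x)"
      using edge_from_child_subtree_iff[OF c False] glue_eq_Cons_iff[OF c(1) y] by blast
    then show ?thesis
      using glue_x iso_child_eq_Nil_iff[OF c] False by simp
  qed
qed

lemma subtree_iso_glue: "subtree_iso b (Node ts) (glue b \<sigma> F)"
  unfolding subtree_iso_def using bij_betw_glue glue_edge_iff by (simp add: glue_def)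

end

lemma rtree_iso_if_subtree_iso_root:
  assumes "subtree_iso r t f"
  shows "rtree_iso Vs E r (tree_verts t) (tree_edges t) []"
  unfolding rtree_iso_def
proof (intro exI conjI ballI)
  show "bij_betw f Vs (tree_verts t)" "f r = []"
    using assms subtree_root unfolding subtree_iso_def by auto
  show "(x, y) \<in> E \<longleftrightarrow> (f x, f y) \<in> tree_edges t" if "x \<in> Vs" "y \<in> Vs" for x y
    using assms that subtree_root unfolding subtree_iso_def tree_edges_iff bij_betw_def by auto
qed

lemma distant_preds_Suc: "distant_preds Vs E (Suc m) b = (\<Union>c\<in>children b. distant_preds Vs E m c)"
  unfolding distant_preds_def children_def by auto

lemma distant_preds_subset_subtree: "distant_preds Vs E m b \<subseteq> subtree b"
  unfolding distant_preds_def by (auto simp: subtree_iff_relpow)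

lemma children_eq_distant_preds: "children b = distant_preds Vs E 1 b"
  unfolding children_def distant_preds_def using edge_in_Vs by auto

end

locale regular_in_tree = in_tree +
  fixes vs :: "nat list" and k :: nat
  assumes vs_nonempty: "vs \<noteq> []" and vs_pos: "\<forall>x\<in>set vs. 0 < x"
    and regular: "V_regular vs Vs E" and depth_k: "tree_depth Vs E r k"
begin

definition height :: "'a \<Rightarrow> nat" where
  "height b = Max {n. distant_preds Vs E n b \<noteq> {}}"

lemma distant_preds_nonempty_iff:
  assumes b: "b \<in> Vs"
  shows "distant_preds Vs E m b \<noteq> {} \<longleftrightarrow> m \<le> height b"
proof -
  let ?N = "{n. distant_preds Vs E n b \<noteq> {}}"
  have "?N \<subseteq> {..k}"
  proof
    fix n assume "n \<in> ?N"
    then obtain x where "x \<in> Vs" "(x, b) \<in> E ^^ n"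
      unfolding distant_preds_def by auto
    then have "depth b + n \<le> k"
      using depth_relpow[OF _ b] relpow_depth depth_k unfolding tree_depth_def by metis
    then show "n \<in> {..k}" by simp
  qed
  then have fin: "finite ?N" by (rule finite_subset) simp
  have "0 \<in> ?N"
    using b unfolding distant_preds_def by auto
  then have top: "height b \<in> ?N"
    unfolding height_def using Max_in[OF fin] by blast
  have down: "m \<in> ?N" if n: "n \<in> ?N" and m: "m \<le> n" for m n
  proof -
    obtain x where "(x, b) \<in> E ^^ n"
      using n unfolding distant_preds_def by auto
    then have "(x, b) \<in> E ^^ (n - m) O E ^^ m"
      using m by (simp flip: relpow_add)
    then obtain y where "(y, b) \<in> E ^^ m"
      by blast
    then show ?thesis
      using relpow_in_Vs b unfolding distant_preds_def by blast
  qed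
  show ?thesis
  proof
    assume "distant_preds Vs E m b \<noteq> {}"
    then show "m \<le> height b"
      unfolding height_def using Max_ge[OF fin] by blast
  next
    assume "m \<le> height b"
    then show "distant_preds Vs E m b \<noteq> {}"
      using down top by blast
  qed
qed

lemma height_root: "height r = k"
proof (rule antisym)
  have "distant_preds Vs E (height r) r \<noteq> {}"
    using distant_preds_nonempty_iff[OF root_in_Vs] by blast
  then show "height r \<le> k"
    using depth_k unfolding tree_depth_def distant_preds_def by blast
  have "distant_preds Vs E k r \<noteq> {}"
    using depth_k unfolding tree_depth_def distant_preds_def by blast
  then show "k \<le> height r"
    using distant_preds_nonempty_iff[OF root_in_Vs] by blast
qed

lemma height_child: assumes "c \<in> children b" shows "height c < height b"
proof -
  have "distant_preds Vs E (height c) c \<noteq> {}"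
    using distant_preds_nonempty_iff children_in_Vs assms by blast
  then have "distant_preds Vs E (Suc (height c)) b \<noteq> {}"
    using assms unfolding distant_preds_Suc by blast
  then have "Suc (height c) \<le> height b"
    using distant_preds_nonempty_iff children_in_Vs[OF assms] by blast
  then show ?thesis by simp
qed

lemma card_distant_preds:
  assumes b: "b \<in> Vs"
  shows "finite (distant_preds Vs E m b) \<and>
    card (distant_preds Vs E m b) = (if m \<le> height b then \<Prod>i=1..m. vseq vs i else 0)"
proof (cases "m = 0")
  case True
  then have "distant_preds Vs E m b = {b}" using b unfolding distant_preds_def by auto
  then show ?thesis using True by simp
next
  case False
  then have "distant_preds Vs E m b = {} \<or>
      finite (distant_preds Vs E m b) \<and> card (distant_preds Vs E m b) = (\<Prod>i=1..m. vseq vs i)"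
    using regular b unfolding V_regular_def by blast
  then show ?thesis
    using distant_preds_nonempty_iff[OF b, of m] by (cases "m \<le> height b") simp_all
qed

lemma finite_children: "b \<in> Vs \<Longrightarrow> finite (children b)"
  using card_distant_preds[of b 1] children_eq_distant_preds by simp

lemma card_children_height_ge:
  assumes b: "b \<in> Vs"
  shows "card {c \<in> children b. m \<le> height c} = (if Suc m \<le> height b then vseq vs (Suc m) else 0)"
proof -
  let ?P = "\<Prod>i=1..m. vseq vs i"
  have "card (distant_preds Vs E (Suc m) b) = (\<Sum>c\<in>children b. card (distant_preds Vs E m c))"
    unfolding distant_preds_Suc
  proof (rule card_UN_disjoint)
    show "finite (children b)" using finite_children[OF b] .
    show "\<forall>c\<in>children b. finite (distant_preds Vs E m c)"
      using card_distant_preds children_in_Vs by blast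
    show "\<forall>c\<in>children b. \<forall>c'\<in>children b. c \<noteq> c' \<longrightarrow>
        distant_preds Vs E m c \<inter> distant_preds Vs E m c' = {}"
      using child_subtrees_disjoint distant_preds_subset_subtree by blast
  qed
  also have "\<dots> = (\<Sum>c\<in>children b. if m \<le> height c then ?P else 0)"
    using card_distant_preds children_in_Vs by (intro sum.cong) auto
  also have "\<dots> = card {c \<in> children b. m \<le> height c} * ?P"
    using finite_children[OF b] by (simp add: sum.If_cases Int_def conj_commute)
  finally have "card (distant_preds Vs E (Suc m) b) = card {c \<in> children b. m \<le> height c} * ?P" .
  moreover have "(\<Prod>i=1..Suc m. vseq vs i) = vseq vs (Suc m) * ?P"
    by (simp add: prod.nat_ivl_Suc')
  ultimately have eq: "card {c \<in> children b. m \<le> height c} * ?P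
      = (if Suc m \<le> height b then vseq vs (Suc m) else 0) * ?P"
    using card_distant_preds[OF b, of "Suc m"] by auto
  have "?P \<noteq> 0"
    using vseq_pos[OF vs_nonempty vs_pos] by simp
  then show ?thesis
    using eq mult_right_cancel by blast
qed

text \<open>No monotonicity of \<open>vs\<close> is needed: the truncated differences in \<open>child_heights\<close> are
  the true ones wherever they matter, since \<open>{c \<in> children b. m \<le> height c}\<close> shrinks as \<open>m\<close> grows.\<close>
lemma card_children_height_eq:
  assumes b: "b \<in> Vs"
  shows "card {c \<in> children b. height c = a} = count_list (child_heights vs (height b)) a"
proof -
  have "{c \<in> children b. a \<le> height c} = {c \<in> children b. height c = a} \<union> {c \<in> children b. Suc a \<le> height c}"
    by auto
  moreover have "card ({c \<in> children b. height c = a} \<union> {c \<in> children b. Suc a \<le> height c})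
      = card {c \<in> children b. height c = a} + card {c \<in> children b. Suc a \<le> height c}"
    using finite_children[OF b] by (intro card_Un_disjoint) auto
  ultimately have "card {c \<in> children b. a \<le> height c}
      = card {c \<in> children b. height c = a} + card {c \<in> children b. Suc a \<le> height c}"
    by simp
  then show ?thesis
    using card_children_height_ge[OF b, of a] card_children_height_ge[OF b, of "Suc a"]
    unfolding count_list_child_heights by (cases "Suc a \<le> height b"; cases "Suc (Suc a) \<le> height b") simp_all
qed

lemma subtree_iso_TV: "b \<in> Vs \<Longrightarrow> \<exists>f. subtree_iso b (TV vs (height b)) f"
proof (induction "height b" arbitrary: b rule: less_induct)
  case less
  define hs where "hs = child_heights vs (height b)"
  obtain \<sigma> where \<sigma>: "bij_betw \<sigma> (children b) {..<length hs}" "\<forall>c\<in>children b. hs ! \<sigma> c = height c"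
    using ex_bij_betw_fibrewise[of "children b" "{..<length hs}" height "(!) hs"]
      finite_children[OF less.prems] card_children_height_eq[OF less.prems]
    unfolding card_nth_eq_count_list hs_def by auto
  have "\<forall>c\<in>children b. \<exists>f. subtree_iso c (TV vs (height c)) f"
    using less.hyps height_child children_in_Vs by blast
  then obtain F where F: "\<And>c. c \<in> children b \<Longrightarrow> subtree_iso c (TV vs (height c)) (F c)"
    by metis
  have "subtree_iso c (map (TV vs) hs ! \<sigma> c) (F c)" if c: "c \<in> children b" for c
  proof -
    have "\<sigma> c < length hs"
      using \<sigma>(1) c by (auto dest: bij_betw_apply)
    then show ?thesis using F[OF c] \<sigma>(2) c by simp
  qed
  then have "subtree_iso b (Node (map (TV vs) hs)) (glue b \<sigma> F)"
    using \<sigma>(1) by (intro subtree_iso_glue) simp_all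
  then show ?case
    unfolding hs_def TV_eq_Node[of vs "height b"] by blast
qed

end

theorem lemma3p2:
  fixes vs :: "nat list" and Vs :: "'a set" and E :: "('a \<times> 'a) set" and r :: 'a and k :: nat
  assumes "vs \<noteq> []"
    and "\<forall>x\<in>set vs. 0 < x"
    and "sorted_wrt (\<ge>) vs"
    and "rooted_tree Vs E r"
    and "V_regular vs Vs E"
    and "tree_depth Vs E r k"
  shows "rtree_iso Vs E r (tree_verts (TV vs k)) (tree_edges (TV vs k)) []"
proof -
  interpret regular_in_tree Vs E r vs k
    using assms by unfold_locales auto
  obtain f where "subtree_iso r (TV vs k) f"
    using subtree_iso_TV[OF root_in_Vs] height_root by auto
  then show ?thesis
    by (rule rtree_iso_if_subtree_iso_root)
qed

end
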